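(* Let $\varphi$ be a DBI normal formula and $i\in\mathcal{A}$. (1) Suppose $\varphi=\bigwedge_{j\in G}B_j\omega_j$ with $\varnothing\ne G\subseteq\mathcal{A}$, and either $i\notin G$, or $i\in G$ and $\omega_i=\bigwedge_{j\in H}B_j\pi_j$ has no propositional component. Then for every pointed Kripke model $(\mathcal{M},v)$: $\mathcal{M},v\nvDash B_i\bot$ iff $\mathcal{M}\odot\mathcal{U}_\varphi,(v,0)\nvDash B_i\bot$. (2) Suppose $\varphi=B_i\bigl(\xi\wedge\bigwedge_{k\in H}B_k\pi_k\bigr)\wedge\bigwedge_{j\in G}B_j\omega_j$ where $i\notin G$ and $\xi$ is purely propositional. Then for every pointed Kripke model $(\mathcal{M},v)$: $\mathcal{M},v\vDash\widehat{B}_i\xi$ iff $\mathcal{M}\odot\mathcal{U}_\varphi,(v,0)\nvDash B_i\bot$.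
   Context: Agents $\mathcal{A}=\{1,\dots,n\}$, $n>1$; language $\mathcal{L}$: $\varphi ::= p \mid \neg\varphi \mid (\varphi\wedge\varphi)\mid B_i\varphi$, with $\top,\bot$ as usual and $\widehat{B}_i\varphi:=\neg B_i\neg\varphi$. Kripke model $\mathcal{M}=\langle S,R,V\rangle$ (nonempty $S$, $R_i\subseteq S\times S$, $V:\mathit{Prop}\to 2^S$), standard truth. Action model $\mathcal{U}=\langle E,Q,\mathsf{pre}\rangle$ (nonempty $E$, $Q_i\subseteq E\times E$, $\mathsf{pre}:E\to\mathcal{L}$). Pointed update of $(\mathcal{M},w)$ with $(\mathcal{U},\alpha)$, defined iff $\mathcal{M},w\vDash\mathsf{pre}(\alpha)$: with $T=\{(x,\beta)\in S\times E\mid\mathcal{M},x\vDash\mathsf{pre}(\beta)\}$, $\mathcal{M}\odot\mathcal{U}=\langle S^{\mathcal U},R^{\mathcal U},V^{\mathcal U}\rangle$ where $S^{\mathcal U}$ is the smallest subset of $T$ containing $(w,\alpha)$ closed under: $(x,\beta)\in S^{\mathcal U}$, $(u,\gamma)\in T$, $xR_iu$, $\beta Q_i\gamma$ imply $(u,\gamma)\in S^{\mathcal U}$; $R^{\mathcal U}_i$ relates $(x,\beta),(u,\gamma)\in S^{\mathcal U}$ iff $xR_iu$ and $\beta Q_i\gamma$; $V^{\mathcal U}(p)=\{(x,\beta)\in S^{\mathcal U}\mid x\in V(p)\}$. Target agents: $\mathsf{ta}(p)=\varnothing$, $\mathsf{ta}(\neg\phi)=\mathsf{ta}(\phi)$,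 $\mathsf{ta}(\phi\wedge\psi)=\mathsf{ta}(\phi)\cup\mathsf{ta}(\psi)$, $\mathsf{ta}(B_i\phi)=\{i\}$. DBI formulas: $\varphi ::= B_i\xi \mid B_i(\xi\wedge\varphi)\mid(\varphi\wedge\varphi)\mid B_i\varphi$, $\xi$ purely propositional. DBI normal: $B_i\xi$ always; $B_i\varphi$, $B_i(\xi\wedge\varphi)$ iff $\varphi$ DBI normal and $i\notin\mathsf{ta}(\varphi)$; $\varphi\wedge\psi$ iff both DBI normal and $\mathsf{ta}(\varphi)\cap\mathsf{ta}(\psi)=\varnothing$. Action model $\mathcal{U}_\varphi=\langle E^\varphi,Q^\varphi,\mathsf{pre}^\varphi\rangle$ for DBI normal $\varphi$, recursively; always $E^\varphi=\{0,-1\}\sqcup D^\varphi$, $\varnothing\ne D^\varphi\subseteq\{1,2,\dots\}$, $\mathsf{pre}^\varphi(0)=\mathsf{pre}^\varphi(-1)=\top$; $\underline{Q}_j:=Q_j\cap((E\setminus\{0\})\times(E\setminus\{0\}))$. (1) $\varphi=B_i\xi$: $D=\{m\}$, $\mathsf{pre}(m)=\xi$, $Q_j=\{(0,-1),(m,-1),(-1,-1)\}$ ($j\ne i$), $Q_i=\{(0,m),(m,m),(-1,-1)\}$. (2) $\varphi=B_i\psi$: fresh $m\ge1$, $m\notin D^\psi$; $D^\varphi=D^\psi\sqcup\{m\}$; $\mathsf{pre}^\varphi$ extends $\mathsf{pre}^\psi$ with $\mathsf{pre}^\varphi(m)=\top$; $Q^\varphi_j=\underline{Q}^\psi_j\cup\{(0,-1)\}\cup\{(m,k)\mid(0,k)\in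 Q^\psi_j\}$ ($j\ne i$); $Q^\varphi_i=\underline{Q}^\psi_i\cup\{(0,m),(m,m)\}$. (3) $\varphi=B_i(\xi\wedge\psi)$: as (2) but $\mathsf{pre}^\varphi(m)=\xi$. (4) $\varphi=\psi\wedge\theta$: with $D^\psi\cap D^\theta=\varnothing$, $D^\varphi=D^\psi\sqcup D^\theta$, $\mathsf{pre}^\varphi=\mathsf{pre}^\psi\cup\mathsf{pre}^\theta$, $Q^\varphi_j=\underline{Q}^\psi_j\cup\underline{Q}^\theta_j\cup\{(0,k)\mid(0,k)\in Q^\psi_j\cup Q^\theta_j, k\in D^\psi\sqcup D^\theta\}\cup\{(0,-1)\mid\text{no such }k\text{ exists}\}$. *)

theory Defs
  imports Main
begin

datatype ('p, 'ag) fm =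
    Atom 'p
  | Neg "('p, 'ag) fm"
  | Conj "('p, 'ag) fm" "('p, 'ag) fm"
  | Bel 'ag "('p, 'ag) fm"

definition fBot :: "('p, 'ag) fm" where
  "fBot = Conj (Atom undefined) (Neg (Atom undefined))"

definition fTop :: "('p, 'ag) fm" where
  "fTop = Neg fBot"

definition Dia :: "'ag \<Rightarrow> ('p, 'ag) fm \<Rightarrow> ('p, 'ag) fm" where
  "Dia i \<phi> = Neg (Bel i (Neg \<phi>))"

fun propositional :: "('p, 'ag) fm \<Rightarrow> bool" where
  "propositional (Atom p) = True"
| "propositional (Neg \<phi>) = propositional \<phi>"
| "propositional (Conj \<phi> \<psi>) = (propositional \<phi> \<and> propositional \<psi>)"
| "propositional (Bel i \<phi>) = False"

fun ta :: "('p, 'ag) fm \<Rightarrow> 'ag set" where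
  "ta (Atom p) = {}"
| "ta (Neg \<phi>) = ta \<phi>"
| "ta (Conj \<phi> \<psi>) = ta \<phi> \<union> ta \<psi>"
| "ta (Bel i \<phi>) = {i}"

fun conjuncts :: "('p, 'ag) fm \<Rightarrow> ('p, 'ag) fm set" where
  "conjuncts (Conj \<phi> \<psi>) = conjuncts \<phi> \<union> conjuncts \<psi>"
| "conjuncts \<phi> = {\<phi>}"

fun is_Bel :: "('p, 'ag) fm \<Rightarrow> bool" where
  "is_Bel (Bel i \<phi>) = True"
| "is_Bel _ = False"

inductive dbi_normal :: "('p, 'ag) fm \<Rightarrow> bool" where
  dbi_prop: "propositional \<xi> \<Longrightarrow> dbi_normal (Bel i \<xi>)"
| dbi_bel: "dbi_normal \<psi> \<Longrightarrow> i \<notin> ta \<psi> \<Longrightarrow> dbi_normal (Bel i \<psi>)"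
| dbi_bel_conj: "propositional \<xi> \<Longrightarrow> dbi_normal \<psi> \<Longrightarrow> i \<notin> ta \<psi>
    \<Longrightarrow> dbi_normal (Bel i (Conj \<xi> \<psi>))"
| dbi_conj: "dbi_normal \<psi> \<Longrightarrow> dbi_normal \<theta> \<Longrightarrow> ta \<psi> \<inter> ta \<theta> = {}
    \<Longrightarrow> dbi_normal (Conj \<psi> \<theta>)"

record ('w, 'ag, 'p) kripke =
  W :: "'w set"
  Rel :: "'ag \<Rightarrow> ('w \<times> 'w) set"
  Val :: "'p \<Rightarrow> 'w set"

definition kripke_model :: "('w, 'ag, 'p) kripke \<Rightarrow> bool" where
  "kripke_model M \<longleftrightarrow> W M \<noteq> {} \<and> (\<forall>i. Rel M i \<subseteq> W M \<times> W M) \<and> (\<forall>p. Val M p \<subseteq> W M)"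

fun sat :: "('w, 'ag, 'p) kripke \<Rightarrow> 'w \<Rightarrow> ('p, 'ag) fm \<Rightarrow> bool" where
  "sat M w (Atom p) = (w \<in> Val M p)"
| "sat M w (Neg \<phi>) = (\<not> sat M w \<phi>)"
| "sat M w (Conj \<phi> \<psi>) = (sat M w \<phi> \<and> sat M w \<psi>)"
| "sat M w (Bel i \<phi>) = (\<forall>u. (w, u) \<in> Rel M i \<longrightarrow> sat M u \<phi>)"

text \<open>Events are integers (the construction of U_phi uses events 0, -1, 1, 2, ...).\<close>
record ('ag, 'p) amodel =
  Ev :: "int set"
  Acc :: "'ag \<Rightarrow> (int \<times> int) set"
  Pre :: "int \<Rightarrow> ('p, 'ag) fm"

definition Tset :: "('w, 'ag, 'p) kripke \<Rightarrow> ('ag, 'p) amodel \<Rightarrow> ('w \<times> int) set" where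
  "Tset M U = {(x, b). x \<in> W M \<and> b \<in> Ev U \<and> sat M x (Pre U b)}"

inductive_set upd_worlds :: "('w, 'ag, 'p) kripke \<Rightarrow> ('ag, 'p) amodel \<Rightarrow> 'w \<Rightarrow> int \<Rightarrow> ('w \<times> int) set"
  for M U w a where
  base: "(w, a) \<in> Tset M U \<Longrightarrow> (w, a) \<in> upd_worlds M U w a"
| step: "(x, b) \<in> upd_worlds M U w a \<Longrightarrow> (u, c) \<in> Tset M U \<Longrightarrow> (x, u) \<in> Rel M i
    \<Longrightarrow> (b, c) \<in> Acc U i \<Longrightarrow> (u, c) \<in> upd_worlds M U w a"

definition update :: "('w, 'ag, 'p) kripke \<Rightarrow> ('ag, 'p) amodel \<Rightarrow> 'w \<Rightarrow> int
    \<Rightarrow> ('w \<times> int, 'ag, 'p) kripke" where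
  "update M U w a =
     \<lparr> W = upd_worlds M U w a,
       Rel = (\<lambda>i. {((x, b), (u, c)). (x, b) \<in> upd_worlds M U w a \<and> (u, c) \<in> upd_worlds M U w a
                     \<and> (x, u) \<in> Rel M i \<and> (b, c) \<in> Acc U i}),
       Val = (\<lambda>p. {(x, b). (x, b) \<in> upd_worlds M U w a \<and> x \<in> Val M p}) \<rparr>"

definition underQ :: "(int \<times> int) set \<Rightarrow> int set \<Rightarrow> (int \<times> int) set" where
  "underQ Q E = Q \<inter> ((E - {0}) \<times> (E - {0}))"

text \<open>\<open>U_of \<phi> U\<close>: U is an action model U_phi built by the recursive construction,
  for some admissible choice of the fresh event names.  E = {0,-1} plus D.\<close>
inductive U_of :: "('p, 'ag) fm \<Rightarrow> ('ag, 'p) amodel \<Rightarrow> bool" where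
  U_prop: "propositional \<xi> \<Longrightarrow> m \<ge> 1 \<Longrightarrow>
    U_of (Bel i \<xi>)
      \<lparr> Ev = {0, -1, m},
        Acc = (\<lambda>j. if j = i then {(0, m), (m, m), (-1, -1)} else {(0, -1), (m, -1), (-1, -1)}),
        Pre = (\<lambda>e. if e = m then \<xi> else fTop) \<rparr>"
| U_bel: "U_of \<psi> U \<Longrightarrow> m \<ge> 1 \<Longrightarrow> m \<notin> Ev U \<Longrightarrow>
    U_of (Bel i \<psi>)
      \<lparr> Ev = Ev U \<union> {m},
        Acc = (\<lambda>j. if j = i then underQ (Acc U j) (Ev U) \<union> {(0, m), (m, m)}
                   else underQ (Acc U j) (Ev U) \<union> {(0, -1)} \<union> {(m, k) | k. (0, k) \<in> Acc U j}),
        Pre = (Pre U)(m := fTop) \<rparr>"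
| U_bel_conj: "propositional \<xi> \<Longrightarrow> U_of \<psi> U \<Longrightarrow> m \<ge> 1 \<Longrightarrow> m \<notin> Ev U \<Longrightarrow>
    U_of (Bel i (Conj \<xi> \<psi>))
      \<lparr> Ev = Ev U \<union> {m},
        Acc = (\<lambda>j. if j = i then underQ (Acc U j) (Ev U) \<union> {(0, m), (m, m)}
                   else underQ (Acc U j) (Ev U) \<union> {(0, -1)} \<union> {(m, k) | k. (0, k) \<in> Acc U j}),
        Pre = (Pre U)(m := \<xi>) \<rparr>"
| U_conj: "U_of \<psi> U1 \<Longrightarrow> U_of \<theta> U2 \<Longrightarrow> Ev U1 \<inter> Ev U2 = {0, -1} \<Longrightarrow>
    U_of (Conj \<psi> \<theta>)
      \<lparr> Ev = Ev U1 \<union> Ev U2,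
        Acc = (\<lambda>j. underQ (Acc U1 j) (Ev U1) \<union> underQ (Acc U2 j) (Ev U2)
                   \<union> {(0, k) | k. (0, k) \<in> Acc U1 j \<union> Acc U2 j \<and> k \<in> (Ev U1 \<union> Ev U2) - {0, -1}}
                   \<union> (if \<not> (\<exists>k. (0, k) \<in> Acc U1 j \<union> Acc U2 j \<and> k \<in> (Ev U1 \<union> Ev U2) - {0, -1})
                      then {(0, -1)} else {})),
        Pre = (\<lambda>e. if e \<in> Ev U1 then Pre U1 e else Pre U2 e) \<rparr>"

end

theory Submission
  imports Defs
begin

text \<open>In \<open>M \<odot> U\<^sub>\<phi>\<close> the \<open>i\<close>-successors of \<open>(v, 0)\<close> are the pairs \<open>(u, c)\<close> with
  \<open>v R\<^sub>i u\<close>, \<open>0 Q\<^sub>i c\<close> and \<open>M, u \<Turnstile> pre(c)\<close>. Along the recursive construction of \<open>U\<^sub>\<phi>\<close> the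
  event \<open>0\<close> always has a \<open>Q\<^sub>i\<close>-successor, and each such successor is either the event created
  for a conjunct \<open>B\<^sub>i \<omega>\<close> of \<open>\<phi>\<close>, whose precondition is the propositional component \<open>\<xi>\<close>
  of \<open>\<omega>\<close> (or \<open>\<top>\<close> if there is none), or the event \<open>-1\<close> with precondition \<open>\<top>\<close> when
  \<open>\<phi>\<close> has no such conjunct. Under the hypothesis of (1) all these preconditions are \<open>\<top>\<close>,
  under that of (2) they are all \<open>\<xi>\<close>, since \<open>B\<^sub>i \<omega>\<close> is then the only conjunct targeting \<open>i\<close>.
  So \<open>(v, 0)\<close> has an \<open>i\<close>-successor iff \<open>v\<close> has one satisfying that precondition.\<close>

lemma sat_fBot [simp]: "\<not> sat M w fBot"
  by (simp add: fBot_def)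

lemma sat_fTop [simp]: "sat M w fTop"
  by (simp add: fTop_def)

lemma Tset_iff: "(x, b) \<in> Tset M U \<longleftrightarrow> x \<in> W M \<and> b \<in> Ev U \<and> sat M x (Pre U b)"
  by (simp add: Tset_def)

lemma upd_worlds_Tset: "(x, b) \<in> upd_worlds M U w a \<Longrightarrow> (x, b) \<in> Tset M U"
  by (induction rule: upd_worlds.induct)

lemma Rel_update_from_root:
  assumes "(w, a) \<in> Tset M U"
  shows "((w, a), (u, c)) \<in> Rel (update M U w a) i \<longleftrightarrow>
    (w, u) \<in> Rel M i \<and> (a, c) \<in> Acc U i \<and> (u, c) \<in> Tset M U"
  using assms by (auto simp: update_def intro: upd_worlds.intros dest: upd_worlds_Tset)

lemma sat_update_Bel_fBot:
  assumes "kripke_model M" and "(w, a) \<in> Tset M U"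
  shows "sat (update M U w a) (w, a) (Bel i fBot) \<longleftrightarrow>
    \<not> (\<exists>u c. (w, u) \<in> Rel M i \<and> c \<in> Ev U \<and> (a, c) \<in> Acc U i \<and> sat M u (Pre U c))"
proof -
  have "Rel M i \<subseteq> W M \<times> W M"
    using assms(1) by (simp add: kripke_model_def)
  then show ?thesis
    using Rel_update_from_root[OF assms(2)] by (auto simp: Tset_iff)
qed

lemma not_sat_update_Bel_fBot_iff_Dia:
  assumes "kripke_model M" and "(w, a) \<in> Tset M U"
    and "\<exists>c \<in> Ev U. (a, c) \<in> Acc U i"
    and "\<And>c. (a, c) \<in> Acc U i \<Longrightarrow> c \<in> Ev U \<Longrightarrow> Pre U c = p"
  shows "\<not> sat (update M U w a) (w, a) (Bel i fBot) \<longleftrightarrow> sat M w (Dia i p)"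
  using assms(3-) unfolding sat_update_Bel_fBot[OF assms(1,2)] Dia_def by auto

lemma not_propositional_if_conjuncts_Bel:
  "\<forall>c \<in> conjuncts \<omega>. is_Bel c \<Longrightarrow> \<not> propositional \<omega>"
  by (induction \<omega>) auto

text \<open>The precondition of the event that the construction of \<open>U_of\<close> attaches to a conjunct
  \<open>Bel i \<omega>\<close>: \<open>\<omega>\<close> in case (1), \<open>\<xi>\<close> in case (3) and \<open>fTop\<close> in case (2).\<close>
definition head_pre :: "('p, 'ag) fm \<Rightarrow> ('p, 'ag) fm" where
  "head_pre \<omega> = (if propositional \<omega> then \<omega>
     else case \<omega> of Conj \<xi> _ \<Rightarrow> if propositional \<xi> then \<xi> else fTop | _ \<Rightarrow> fTop)"

lemma head_pre_propositional: "propositional \<xi> \<Longrightarrow> head_pre \<xi> = \<xi>"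
  by (simp add: head_pre_def)

lemma head_pre_conjuncts_Bel: "\<forall>c \<in> conjuncts \<omega>. is_Bel c \<Longrightarrow> head_pre \<omega> = fTop"
  using not_propositional_if_conjuncts_Bel
  by (cases \<omega>) (auto simp: head_pre_def)

lemma head_pre_Conj:
  "propositional \<xi> \<Longrightarrow> \<forall>c \<in> conjuncts \<psi>. is_Bel c \<Longrightarrow> head_pre (Conj \<xi> \<psi>) = \<xi>"
  using not_propositional_if_conjuncts_Bel by (auto simp: head_pre_def)

lemma U_of_conjuncts_Bel: "U_of \<phi> U \<Longrightarrow> \<forall>c \<in> conjuncts \<phi>. is_Bel c"
  by (induction rule: U_of.induct) auto

lemma head_pre_U_of: "U_of \<psi> U \<Longrightarrow> head_pre \<psi> = fTop"
  by (simp add: U_of_conjuncts_Bel head_pre_conjuncts_Bel)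

lemma U_of_root_events:
  "U_of \<phi> U \<Longrightarrow> 0 \<in> Ev U \<and> -1 \<in> Ev U \<and> Pre U 0 = fTop \<and> Pre U (-1) = fTop"
  by (induction rule: U_of.induct) auto

lemma U_of_root_Tset: "U_of \<phi> U \<Longrightarrow> v \<in> W M \<Longrightarrow> (v, 0) \<in> Tset M U"
  by (simp add: Tset_iff U_of_root_events)

lemma U_of_Acc_subset: "U_of \<phi> U \<Longrightarrow> Acc U j \<subseteq> Ev U \<times> Ev U"
  by (induction rule: U_of.induct) (use U_of_root_events in \<open>auto simp: underQ_def\<close>)

lemma U_of_Acc_root_serial: "U_of \<phi> U \<Longrightarrow> \<exists>c \<in> Ev U. (0, c) \<in> Acc U j"
  by (induction rule: U_of.induct) (use U_of_root_events in \<open>auto simp: underQ_def\<close>)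

lemma U_of_conjunct_event:
  "U_of \<phi> U \<Longrightarrow> Bel j \<omega> \<in> conjuncts \<phi> \<Longrightarrow>
    \<exists>c \<in> Ev U - {0, -1}. (0, c) \<in> Acc U j \<and> Pre U c = head_pre \<omega>"
proof (induction arbitrary: j \<omega> rule: U_of.induct)
  case (U_bel \<psi> U m i)
  then show ?case
    by (auto simp: head_pre_U_of)
next
  case (U_bel_conj \<xi> \<psi> U m i)
  then have "head_pre (Conj \<xi> \<psi>) = \<xi>"
    by (simp add: head_pre_Conj U_of_conjuncts_Bel)
  with U_bel_conj show ?case
    by auto
next
  case (U_conj \<psi> U1 \<theta> U2)
  from U_conj.prems consider (left) "Bel j \<omega> \<in> conjuncts \<psi>" | (right) "Bel j \<omega> \<in> conjuncts \<theta>"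
    by auto
  then show ?case
  proof cases
    case left
    with U_conj.IH(1) obtain c
      where "c \<in> Ev U1 - {0, -1}" "(0, c) \<in> Acc U1 j" "Pre U1 c = head_pre \<omega>"
      by blast
    then show ?thesis
      by (intro bexI[of _ c]) auto
  next
    case right
    with U_conj.IH(2) obtain c
      where c: "c \<in> Ev U2 - {0, -1}" "(0, c) \<in> Acc U2 j" "Pre U2 c = head_pre \<omega>"
      by blast
    moreover have "c \<notin> Ev U1"
      using U_conj.hyps(3) c(1) by auto
    ultimately show ?thesis
      by (intro bexI[of _ c]) auto
  qed
qed (auto simp: head_pre_propositional)

lemma U_of_Acc_root_pre:
  "U_of \<phi> U \<Longrightarrow> (0, c) \<in> Acc U j \<Longrightarrow>
    (\<exists>\<omega>. Bel j \<omega> \<in> conjuncts \<phi> \<and> Pre U c = head_pre \<omega>) \<or> (c = -1 \<and> (\<forall>\<omega>. Bel j \<omega> \<notin> conjuncts \<phi>))"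
proof (induction arbitrary: c j rule: U_of.induct)
  case (U_bel \<psi> U m i)
  then show ?case
    by (auto simp: head_pre_U_of underQ_def split: if_splits)
next
  case (U_bel_conj \<xi> \<psi> U m i)
  then have "head_pre (Conj \<xi> \<psi>) = \<xi>"
    by (simp add: head_pre_Conj U_of_conjuncts_Bel)
  with U_bel_conj show ?case
    by (auto simp: underQ_def split: if_splits)
next
  case (U_conj \<psi> U1 \<theta> U2)
  let ?succ = "\<lambda>k. (0, k) \<in> Acc U1 j \<union> Acc U2 j \<and> k \<in> Ev U1 \<union> Ev U2 - {0, -1}"
  from U_conj.prems consider (left) "(0, c) \<in> Acc U1 j" "?succ c" | (right) "(0, c) \<in> Acc U2 j" "?succ c"
    | (none) "c = -1" "\<nexists>k. ?succ k"
    by (auto simp: underQ_def split: if_splits)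
  then show ?case
  proof cases
    case left
    then have "c \<in> Ev U1"
      using U_of_Acc_subset[OF U_conj.hyps(1)] by blast
    with left U_conj.IH(1) show ?thesis
      by auto
  next
    case right
    then have "c \<in> Ev U2 - Ev U1"
      using U_of_Acc_subset[OF U_conj.hyps(2)] U_conj.hyps(3) by blast
    with right U_conj.IH(2) show ?thesis
      by auto
  next
    case none
    then show ?thesis
      using U_of_conjunct_event[OF U_conj.hyps(1)] U_of_conjunct_event[OF U_conj.hyps(2)] by fastforce
  qed
qed (auto simp: head_pre_propositional split: if_splits)

theorem corollary2:
  fixes \<phi> :: "('p, 'ag::finite) fm" and i :: 'ag
  assumes agents: "card (UNIV :: 'ag set) \<ge> 2"
    and normal: "dbi_normal \<phi>"
  shows
    "((\<forall>\<omega>. Bel i \<omega> \<in> conjuncts \<phi> \<longrightarrow> (\<forall>c \<in> conjuncts \<omega>. is_Bel c)) \<longrightarrow>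
       (\<forall>(M :: ('w, 'ag, 'p) kripke) v U.
          kripke_model M \<longrightarrow> v \<in> W M \<longrightarrow> U_of \<phi> U \<longrightarrow>
          ((\<not> sat M v (Bel i fBot)) \<longleftrightarrow> (\<not> sat (update M U v 0) (v, 0) (Bel i fBot)))))
     \<and>
     (\<forall>\<xi> \<omega>. propositional \<xi> \<longrightarrow> Bel i \<omega> \<in> conjuncts \<phi> \<longrightarrow>
       (\<omega> = \<xi> \<or> (\<exists>\<psi>. \<omega> = Conj \<xi> \<psi> \<and> (\<forall>c \<in> conjuncts \<psi>. is_Bel c))) \<longrightarrow>
       (\<forall>c \<in> conjuncts \<phi>. c \<noteq> Bel i \<omega> \<longrightarrow> i \<notin> ta c) \<longrightarrow>
       (\<forall>(M :: ('w, 'ag, 'p) kripke) v U.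
          kripke_model M \<longrightarrow> v \<in> W M \<longrightarrow> U_of \<phi> U \<longrightarrow>
          (sat M v (Dia i \<xi>) \<longleftrightarrow> (\<not> sat (update M U v 0) (v, 0) (Bel i fBot)))))"
proof (intro conjI impI allI)
  fix M :: "('w, 'ag, 'p) kripke" and v U
  assume no_prop: "\<forall>\<omega>. Bel i \<omega> \<in> conjuncts \<phi> \<longrightarrow> (\<forall>c \<in> conjuncts \<omega>. is_Bel c)"
    and M: "kripke_model M" and v: "v \<in> W M" and U: "U_of \<phi> U"
  have "Pre U c = fTop" if "(0, c) \<in> Acc U i" for c
    using U_of_Acc_root_pre[OF U that] no_prop U_of_root_events[OF U]
    by (auto simp: head_pre_conjuncts_Bel)
  then have "\<not> sat (update M U v 0) (v, 0) (Bel i fBot) \<longleftrightarrow> sat M v (Dia i fTop)"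
    using not_sat_update_Bel_fBot_iff_Dia[OF M U_of_root_Tset[OF U v] U_of_Acc_root_serial[OF U]]
    by blast
  then show "\<not> sat M v (Bel i fBot) \<longleftrightarrow> \<not> sat (update M U v 0) (v, 0) (Bel i fBot)"
    by (simp add: Dia_def)
next
  fix \<xi> \<omega> and M :: "('w, 'ag, 'p) kripke" and v U
  assume "propositional \<xi>" and conjunct: "Bel i \<omega> \<in> conjuncts \<phi>"
    and "\<omega> = \<xi> \<or> (\<exists>\<psi>. \<omega> = Conj \<xi> \<psi> \<and> (\<forall>c \<in> conjuncts \<psi>. is_Bel c))"
    and unique: "\<forall>c \<in> conjuncts \<phi>. c \<noteq> Bel i \<omega> \<longrightarrow> i \<notin> ta c"
    and M: "kripke_model M" and v: "v \<in> W M" and U: "U_of \<phi> U"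
  then have "head_pre \<omega> = \<xi>"
    by (auto simp: head_pre_propositional head_pre_Conj)
  then have "Pre U c = \<xi>" if "(0, c) \<in> Acc U i" for c
    using U_of_Acc_root_pre[OF U that] conjunct unique by fastforce
  then show "sat M v (Dia i \<xi>) \<longleftrightarrow> \<not> sat (update M U v 0) (v, 0) (Bel i fBot)"
    using not_sat_update_Bel_fBot_iff_Dia[OF M U_of_root_Tset[OF U v] U_of_Acc_root_serial[OF U]]
    by blast
qed

end
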